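(* If $r\ge 2$, then the glued binary tree $GT(r)$ satisfies $\mu_{\rm t}(GT(r))=\mu_{\rm d}(GT(r))=2^{r-1}$, and the number of $\mu_{\rm t}$-sets and the number of $\mu_{\rm d}$-sets of $GT(r)$ are both equal to $2^{2^{r-1}}$.
   Context: A perfect binary tree of depth $r\ge1$ is a rooted tree in which every non-leaf vertex has exactly $2$ children and all leaves have depth $r$. The glued binary tree $GT(r)$ is obtained from two copies of the perfect binary tree of depth $r$ by pairwise identifying their leaves (via a fixed isomorphism of the copies). For $S\subseteq V(G)$, two vertices $u,v$ are $S$-visible if there exists a shortest $u,v$-path $P$ with $V(P)\cap S\subseteq\{u,v\}$; $S$ is a mutual-visibility set if every two vertices of $S$ are $S$-visible. $S$ is a dual mutual-visibility set if it is a mutual-visibility set and every pair $u,v\in V(G)\setminus S$ is $S$-visible. $S$ is a total mutual-visibility set if every pair of vertices of $G$ is $S$-visible. Largest dual (resp. total) mutual-visibility sets are $\mu_{\rm d}$-sets (resp. $\mu_{\rm t}$-sets), and their sizes are $\mu_{\rm d}(G)$ (resp. $\mu_{\rm t}(G)$). *)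

theory Defs
  imports Main
begin

definition is_walk :: "'a set \<Rightarrow> ('a \<Rightarrow> 'a \<Rightarrow> bool) \<Rightarrow> 'a list \<Rightarrow> 'a \<Rightarrow> 'a \<Rightarrow> bool" where
  "is_walk V E p u v \<longleftrightarrow> p \<noteq> [] \<and> hd p = u \<and> last p = v \<and> set p \<subseteq> V \<and>
     (\<forall>i. Suc i < length p \<longrightarrow> E (p ! i) (p ! Suc i))"

definition gdist :: "'a set \<Rightarrow> ('a \<Rightarrow> 'a \<Rightarrow> bool) \<Rightarrow> 'a \<Rightarrow> 'a \<Rightarrow> nat" where
  "gdist V E u v = (LEAST n. \<exists>p. is_walk V E p u v \<and> length p = Suc n)"

definition is_shortest_path :: "'a set \<Rightarrow> ('a \<Rightarrow> 'a \<Rightarrow> bool) \<Rightarrow> 'a list \<Rightarrow> 'a \<Rightarrow> 'a \<Rightarrow> bool" where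
  "is_shortest_path V E p u v \<longleftrightarrow> is_walk V E p u v \<and> length p = Suc (gdist V E u v)"

definition S_visible :: "'a set \<Rightarrow> ('a \<Rightarrow> 'a \<Rightarrow> bool) \<Rightarrow> 'a set \<Rightarrow> 'a \<Rightarrow> 'a \<Rightarrow> bool" where
  "S_visible V E S u v \<longleftrightarrow> (\<exists>p. is_shortest_path V E p u v \<and> set p \<inter> S \<subseteq> {u, v})"

definition mutual_visibility_set :: "'a set \<Rightarrow> ('a \<Rightarrow> 'a \<Rightarrow> bool) \<Rightarrow> 'a set \<Rightarrow> bool" where
  "mutual_visibility_set V E S \<longleftrightarrow> S \<subseteq> V \<and> (\<forall>u\<in>S. \<forall>v\<in>S. S_visible V E S u v)"

definition dual_mutual_visibility_set :: "'a set \<Rightarrow> ('a \<Rightarrow> 'a \<Rightarrow> bool) \<Rightarrow> 'a set \<Rightarrow> bool" where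
  "dual_mutual_visibility_set V E S \<longleftrightarrow> mutual_visibility_set V E S \<and>
     (\<forall>u\<in>V - S. \<forall>v\<in>V - S. S_visible V E S u v)"

definition total_mutual_visibility_set :: "'a set \<Rightarrow> ('a \<Rightarrow> 'a \<Rightarrow> bool) \<Rightarrow> 'a set \<Rightarrow> bool" where
  "total_mutual_visibility_set V E S \<longleftrightarrow> S \<subseteq> V \<and> (\<forall>u\<in>V. \<forall>v\<in>V. S_visible V E S u v)"

definition mu_d :: "'a set \<Rightarrow> ('a \<Rightarrow> 'a \<Rightarrow> bool) \<Rightarrow> nat" where
  "mu_d V E = Max {card S | S. dual_mutual_visibility_set V E S}"

definition mu_t :: "'a set \<Rightarrow> ('a \<Rightarrow> 'a \<Rightarrow> bool) \<Rightarrow> nat" where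
  "mu_t V E = Max {card S | S. total_mutual_visibility_set V E S}"

definition mu_d_sets :: "'a set \<Rightarrow> ('a \<Rightarrow> 'a \<Rightarrow> bool) \<Rightarrow> 'a set set" where
  "mu_d_sets V E = {S. dual_mutual_visibility_set V E S \<and> card S = mu_d V E}"

definition mu_t_sets :: "'a set \<Rightarrow> ('a \<Rightarrow> 'a \<Rightarrow> bool) \<Rightarrow> 'a set set" where
  "mu_t_sets V E = {S. total_mutual_visibility_set V E S \<and> card S = mu_t V E}"

text \<open>A vertex of the perfect binary tree of depth r is a bool list of length \<le> r
  (the path from the root). A vertex of GT(r) is a pair (copy, word); leaves
  (length r) are identified between the copies, canonically represented with copy False.\<close>

definition gt_norm :: "nat \<Rightarrow> bool \<Rightarrow> bool list \<Rightarrow> bool \<times> bool list" where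
  "gt_norm r c w = ((if length w = r then False else c), w)"

definition GT_V :: "nat \<Rightarrow> (bool \<times> bool list) set" where
  "GT_V r = {(c, w). length w < r} \<union> {(False, w) | w. length w = r}"

definition GT_E :: "nat \<Rightarrow> bool \<times> bool list \<Rightarrow> bool \<times> bool list \<Rightarrow> bool" where
  "GT_E r u v \<longleftrightarrow> (\<exists>c w x. length w < r \<and>
     ((u = gt_norm r c w \<and> v = gt_norm r c (w @ [x])) \<or>
      (v = gt_norm r c w \<and> u = gt_norm r c (w @ [x]))))"

end

theory Submission
  imports Defs "HOL-Library.FuncSet"
begin

text \<open>
  Let S be a dual mutual-visibility set of GT(r). No vertex p of depth r - 1 lies in S: p is the
  only common neighbour of its parent and of each of its leaf children, so exactly one of these
  lies in S, and either way one finds two vertices on the same side of S all of whose shortest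
  paths (of length 2 or 3) pass through S. Since two siblings of depth below r see each other only
  through their parent, an inner vertex in S forces a child into S, so S consists of leaves only.
  Two sibling leaves in S would block the two copies of their parent from each other.
  Conversely, any set of leaves without two siblings is a total mutual-visibility set, because on
  a shortest path every inner vertex from S can be replaced by its sibling leaf, which has the
  same neighbours. So the mu_d-sets and the mu_t-sets are exactly the sets choosing one leaf below
  each of the 2^(r-1) vertices of depth r - 1.
\<close>

lemma is_walk_singleton: "is_walk V E [x] a b \<longleftrightarrow> x = a \<and> x = b \<and> x \<in> V"
  unfolding is_walk_def by auto

lemma is_walk_Cons_Cons:
  "is_walk V E (x # y # p) a b \<longleftrightarrow> x = a \<and> x \<in> V \<and> E x y \<and> is_walk V E (y # p) y b"
  unfolding is_walk_def by (auto simp: less_Suc_eq_0_disj)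

lemma is_walk_ConsI:
  assumes "is_walk V E p y b" "x \<in> V" "E x y"
  shows "is_walk V E (x # p) x b"
proof -
  from assms(1) have "p = y # tl p"
    unfolding is_walk_def by (cases p) auto
  with assms show ?thesis by (metis is_walk_Cons_Cons)
qed

lemma is_walk_length_3:
  assumes "is_walk V E p a b" "length p = 3"
  shows "\<exists>x. p = [a, x, b] \<and> E a x \<and> E x b"
  using assms by (auto simp: numeral_eq_Suc length_Suc_conv is_walk_Cons_Cons is_walk_singleton)

lemma is_walk_length_4:
  assumes "is_walk V E p a b" "length p = 4"
  shows "\<exists>x y. p = [a, x, y, b] \<and> E a x \<and> E x y \<and> E y b"
  using assms by (auto simp: numeral_eq_Suc length_Suc_conv is_walk_Cons_Cons is_walk_singleton)

lemma is_walk_length_le_2: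
  assumes "is_walk V E p a b" "length p \<le> 2"
  shows "a = b \<or> E a b"
  using assms
  by (auto simp: numeral_eq_Suc le_Suc_eq length_Suc_conv is_walk_Cons_Cons is_walk_singleton is_walk_def)

lemma shortest_path_length_le:
  assumes "is_shortest_path V E p a b" "is_walk V E q a b"
  shows "length p \<le> length q"
proof -
  have q: "length q = Suc (length q - 1)"
    using \<open>is_walk V E q a b\<close> by (cases q) (auto simp: is_walk_def)
  with assms(2) have "\<exists>q'. is_walk V E q' a b \<and> length q' = Suc (length q - 1)" by blast
  then have "gdist V E a b \<le> length q - 1"
    unfolding gdist_def by (rule Least_le)
  with assms(1) q show ?thesis unfolding is_shortest_path_def by linarith
qed

lemma shortest_path_exists:
  assumes "is_walk V E q a b"
  shows "\<exists>p. is_shortest_path V E p a b"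
proof -
  have "length q = Suc (length q - 1)"
    using assms by (cases q) (auto simp: is_walk_def)
  with assms have "\<exists>q'. is_walk V E q' a b \<and> length q' = Suc (length q - 1)" by blast
  then have "\<exists>p. is_walk V E p a b \<and> length p = Suc (gdist V E a b)"
    unfolding gdist_def by (rule LeastI)
  then show ?thesis unfolding is_shortest_path_def .
qed

lemma not_S_visible_if_common_neighbours_in:
  assumes "a \<noteq> b" "\<not> E a b" "is_walk V E [a, x, b] a b"
    and blocked: "\<And>y. E a y \<Longrightarrow> E y b \<Longrightarrow> y \<in> S"
  shows "\<not> S_visible V E S a b"
proof
  assume "S_visible V E S a b"
  then obtain p where p: "is_shortest_path V E p a b" and avoid: "set p \<inter> S \<subseteq> {a, b}"
    unfolding S_visible_def by blast
  have walk: "is_walk V E p a b" using p unfolding is_shortest_path_def by blast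
  have "length p \<le> 3" using shortest_path_length_le[OF p assms(3)] by simp
  moreover have "\<not> length p \<le> 2" using is_walk_length_le_2[OF walk] assms(1,2) by blast
  ultimately obtain y where "p = [a, y, b]" "E a y" "E y b"
    using is_walk_length_3[OF walk] by fastforce
  moreover have "y \<notin> {a, b}" using \<open>E a y\<close> \<open>E y b\<close> assms(2) by auto
  ultimately show False using blocked avoid by auto
qed

lemma not_S_visible_if_walks_of_length_3_blocked:
  assumes "a \<noteq> b" "\<not> E a b" "\<And>y. E a y \<Longrightarrow> \<not> E y b" "is_walk V E [a, x, y, b] a b"
    and blocked: "\<And>x y. E a x \<Longrightarrow> E x y \<Longrightarrow> E y b \<Longrightarrow> x \<in> S \<or> y \<in> S"
  shows "\<not> S_visible V E S a b"
proof
  assume "S_visible V E S a b"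
  then obtain p where p: "is_shortest_path V E p a b" and avoid: "set p \<inter> S \<subseteq> {a, b}"
    unfolding S_visible_def by blast
  have walk: "is_walk V E p a b" using p unfolding is_shortest_path_def by blast
  have "length p \<le> 4" using shortest_path_length_le[OF p assms(4)] by simp
  moreover have "\<not> length p \<le> 2" using is_walk_length_le_2[OF walk] assms(1,2) by blast
  moreover have "length p \<noteq> 3" using is_walk_length_3[OF walk] assms(3) by blast
  ultimately have "length p = 4" by linarith
  then obtain x' y' where "p = [a, x', y', b]" "E a x'" "E x' y'" "E y' b"
    using is_walk_length_4[OF walk] by blast
  moreover have "x' \<notin> {a, b}" "y' \<notin> {a, b}"
    using \<open>E a x'\<close> \<open>E x' y'\<close> \<open>E y' b\<close> assms(2,3) by auto
  ultimately show False using blocked avoid by auto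
qed

lemma dual_mutual_visibility_set_not_S_visible:
  assumes "dual_mutual_visibility_set V E S" "a \<in> V" "b \<in> V" "\<not> S_visible V E S a b"
  shows "a \<in> S \<longleftrightarrow> b \<notin> S"
  using assms unfolding dual_mutual_visibility_set_def mutual_visibility_set_def by blast

lemma total_imp_dual_mutual_visibility_set:
  "total_mutual_visibility_set V E S \<Longrightarrow> dual_mutual_visibility_set V E S"
  unfolding total_mutual_visibility_set_def dual_mutual_visibility_set_def mutual_visibility_set_def
  by blast

lemma S_visible_if_twins:
  assumes sym: "symp E"
    and independent: "\<And>x y. x \<in> S \<Longrightarrow> E x y \<Longrightarrow> y \<notin> S"
    and twin_in: "\<And>x. x \<in> S \<Longrightarrow> twin x \<in> V - S"
    and twin_adj: "\<And>x y. x \<in> S \<Longrightarrow> E x y \<Longrightarrow> E (twin x) y"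
    and p: "is_shortest_path V E p u v"
  shows "S_visible V E S u v"
proof -
  txt \<open>Replace every inner vertex of p lying in S by its twin; as S is independent, no two
    consecutive vertices are replaced.\<close>
  define n where "n = length p"
  define inner where "inner i \<longleftrightarrow> 0 < i \<and> Suc i < n" for i
  define f where "f i = (if inner i \<and> p ! i \<in> S then twin (p ! i) else p ! i)" for i
  define q where "q = map f [0..<n]"
  have walk: "is_walk V E p u v" and n: "n = Suc (gdist V E u v)"
    using p by (auto simp: is_shortest_path_def n_def)
  have p_in: "p ! i \<in> V" if "i < n" for i
    using walk that unfolding is_walk_def n_def by (meson nth_mem subsetD)
  have p_adj: "E (p ! i) (p ! Suc i)" if "Suc i < n" for i
    using walk that unfolding is_walk_def n_def by blast
  have f_adj: "E (f i) (f (Suc i))" if "Suc i < n" for i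
  proof (cases "inner i \<and> p ! i \<in> S")
    case True
    then have "p ! Suc i \<notin> S" using independent p_adj[OF that] by blast
    then have "f i = twin (p ! i)" "f (Suc i) = p ! Suc i" using True by (simp_all add: f_def)
    then show ?thesis using True twin_adj p_adj[OF that] by simp
  next
    case False
    then have fi: "f i = p ! i" by (auto simp: f_def)
    show ?thesis
    proof (cases "inner (Suc i) \<and> p ! Suc i \<in> S")
      case True
      then have "f (Suc i) = twin (p ! Suc i)" by (simp add: f_def)
      moreover have "E (twin (p ! Suc i)) (p ! i)"
        using True twin_adj sympD[OF sym p_adj[OF that]] by blast
      ultimately show ?thesis using fi sym by (simp add: sympD)
    next
      case False
      then have "f (Suc i) = p ! Suc i" by (auto simp: f_def)
      then show ?thesis using fi p_adj[OF that] by simp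
    qed
  qed
  have "p \<noteq> []" "hd p = u" "last p = v" using walk unfolding is_walk_def by auto
  then have f_ends: "f 0 = u" "f (n - 1) = v"
    by (auto simp: f_def inner_def n_def hd_conv_nth last_conv_nth)
  have "is_walk V E q u v"
    unfolding is_walk_def
  proof (intro conjI allI impI)
    have "0 < n" using n by simp
    then show "q \<noteq> []" "hd q = u" "last q = v"
      using f_ends by (simp_all add: q_def hd_map last_map)
    show "set q \<subseteq> V" using p_in twin_in by (auto simp: q_def f_def)
  qed (use f_adj in \<open>simp add: q_def\<close>)
  then have "is_shortest_path V E q u v" using n by (simp add: is_shortest_path_def q_def)
  moreover have "set q \<inter> S \<subseteq> {u, v}"
  proof
    fix x assume "x \<in> set q \<inter> S"
    then obtain i where "i < n" "x = f i" "x \<in> S" by (auto simp: q_def)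
    then have "\<not> inner i" using twin_in by (auto simp: f_def split: if_splits)
    then have "i = 0 \<or> i = n - 1" using \<open>i < n\<close> by (auto simp: inner_def)
    then show "x \<in> {u, v}" using f_ends \<open>x = f i\<close> by auto
  qed
  ultimately show ?thesis unfolding S_visible_def by blast
qed

lemma is_walk_if_rtranclp:
  assumes "(\<lambda>x y. E x y \<and> x \<in> V \<and> y \<in> V)\<^sup>*\<^sup>* a b" "a \<in> V"
  shows "\<exists>p. is_walk V E p a b"
  using assms
proof (induction rule: converse_rtranclp_induct)
  case base
  then have "is_walk V E [b] b b" by (simp add: is_walk_singleton)
  then show ?case by blast
next
  case (step x y)
  then show ?case by (blast intro: is_walk_ConsI)
qed

lemma GT_E_iff:
  "GT_E r (c, w) (c', w') \<longleftrightarrow>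
     (length w < r \<and> (\<exists>x. w' = w @ [x]) \<and> c' = (length w' < r \<and> c)) \<or>
     (length w' < r \<and> (\<exists>x. w = w' @ [x]) \<and> c = (length w < r \<and> c'))"
  (is "_ \<longleftrightarrow> ?down \<or> ?up")
proof
  assume "GT_E r (c, w) (c', w')"
  then obtain d v x where "length v < r"
    "(c, w) = gt_norm r d v \<and> (c', w') = gt_norm r d (v @ [x]) \<or>
     (c', w') = gt_norm r d v \<and> (c, w) = gt_norm r d (v @ [x])"
    unfolding GT_E_def by blast
  then show "?down \<or> ?up" by (auto simp: gt_norm_def split: if_splits)
next
  have "GT_E r (c, w) (c', w')" if "length w < r" "w' = w @ [x]" "c' = (length w' < r \<and> c)" for x
    unfolding GT_E_def gt_norm_def using that by (intro exI[of _ c] exI[of _ w] exI[of _ x]) auto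
  moreover have "GT_E r (c, w) (c', w')"
    if "length w' < r" "w = w' @ [x]" "c = (length w < r \<and> c')" for x
    unfolding GT_E_def gt_norm_def using that by (intro exI[of _ c'] exI[of _ w'] exI[of _ x]) auto
  ultimately show "?down \<or> ?up \<Longrightarrow> GT_E r (c, w) (c', w')" by blast
qed

lemma symp_GT_E: "symp (GT_E r)"
  unfolding symp_def GT_E_def by blast

lemma GT_V_iff: "(c, w) \<in> GT_V r \<longleftrightarrow> length w < r \<or> (\<not> c \<and> length w = r)"
  unfolding GT_V_def by auto

lemma GT_rtranclp_root:
  assumes "length w \<le> r"
  shows "(\<lambda>x y. GT_E r x y \<and> x \<in> GT_V r \<and> y \<in> GT_V r)\<^sup>*\<^sup>* (gt_norm r c w) (gt_norm r c [])"
  using assms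
proof (induction w rule: rev_induct)
  case (snoc x w)
  then have "gt_norm r c w = (c, w)" "(c, w) \<in> GT_V r" "gt_norm r c (w @ [x]) \<in> GT_V r"
      "GT_E r (gt_norm r c (w @ [x])) (c, w)"
    by (auto simp: gt_norm_def GT_V_iff GT_E_iff)
  with snoc show ?case by (auto intro: converse_rtranclp_into_rtranclp)
qed simp

lemma GT_connected:
  assumes "r \<ge> 1" "u \<in> GT_V r" "v \<in> GT_V r"
  shows "\<exists>p. is_walk (GT_V r) (GT_E r) p u v"
proof -
  let ?R = "(\<lambda>x y. GT_E r x y \<and> x \<in> GT_V r \<and> y \<in> GT_V r)\<^sup>*\<^sup>*"
  have sym: "symp ?R"
    by (intro symp_rtranclp sympI) (blast dest: sympD[OF symp_GT_E])
  have root: "?R (gt_norm r c w) (c, [])" if "length w \<le> r" for c w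
    using GT_rtranclp_root[OF that] assms(1) by (simp add: gt_norm_def)
  txt \<open>The two roots are joined through a leaf, which both copies share.\<close>
  have "?R (gt_norm r True (replicate r False)) (True, [])"
    using root by simp
  then have "?R (True, []) (gt_norm r False (replicate r False))"
    by (auto simp: gt_norm_def intro: sympD[OF sym])
  then have roots: "?R (True, []) (False, [])"
    using root[of "replicate r False" False] by (rule rtranclp_trans) simp
  have to_root: "?R x (False, [])" if "x \<in> GT_V r" for x
  proof -
    obtain c w where x: "x = (c, w)" by (cases x)
    with that have "x = gt_norm r c w" "length w \<le> r" by (auto simp: GT_V_iff gt_norm_def)
    then show ?thesis using root[of w c] roots by (cases c) (auto intro: rtranclp_trans)
  qed
  have "?R u v"
    using to_root[OF assms(2)] sympD[OF sym to_root[OF assms(3)]] by (rule rtranclp_trans)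
  then show ?thesis using assms(2) by (rule is_walk_if_rtranclp)
qed

lemmas GT_walk_simps = is_walk_Cons_Cons is_walk_singleton GT_E_iff GT_V_iff

lemma GT_not_visible_parent_grandchild:
  assumes "length v + 2 = r" "(c, v @ [y]) \<in> S"
  shows "\<not> S_visible (GT_V r) (GT_E r) S (c, v) (False, v @ [y, t])"
proof (rule not_S_visible_if_common_neighbours_in)
  show "is_walk (GT_V r) (GT_E r) [(c, v), (c, v @ [y]), (False, v @ [y, t])]
      (c, v) (False, v @ [y, t])"
    using assms(1) by (auto simp: GT_walk_simps)
  fix z assume "GT_E r (c, v) z" "GT_E r z (False, v @ [y, t])"
  then show "z \<in> S" using assms by (cases z) (auto simp: GT_E_iff)
qed (auto simp: GT_E_iff)

lemma GT_not_visible_sibling_leaves: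
  assumes "length w + 1 = r" "(False, w) \<in> S" "(True, w) \<in> S"
  shows "\<not> S_visible (GT_V r) (GT_E r) S (False, w @ [False]) (False, w @ [True])"
proof (rule not_S_visible_if_common_neighbours_in)
  show "is_walk (GT_V r) (GT_E r) [(False, w @ [False]), (False, w), (False, w @ [True])]
      (False, w @ [False]) (False, w @ [True])"
    using assms(1) by (auto simp: GT_walk_simps)
  fix z assume "GT_E r (False, w @ [False]) z" "GT_E r z (False, w @ [True])"
  then have "z = (False, w) \<or> z = (True, w)" by (cases z) (auto simp: GT_E_iff)
  then show "z \<in> S" using assms by blast
qed (auto simp: GT_E_iff)

lemma GT_not_visible_siblings:
  assumes "length v + 1 < r" "(c, v) \<in> S"
  shows "\<not> S_visible (GT_V r) (GT_E r) S (c, v @ [y]) (c, v @ [\<not> y])"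
proof (rule not_S_visible_if_common_neighbours_in)
  show "is_walk (GT_V r) (GT_E r) [(c, v @ [y]), (c, v), (c, v @ [\<not> y])]
      (c, v @ [y]) (c, v @ [\<not> y])"
    using assms(1) by (auto simp: GT_walk_simps)
  fix z assume "GT_E r (c, v @ [y]) z" "GT_E r z (c, v @ [\<not> y])"
  then show "z \<in> S" using assms by (cases z) (auto simp: GT_E_iff)
qed (auto simp: GT_E_iff)

lemma GT_not_visible_twins:
  assumes "length w + 1 = r" "(False, w @ [False]) \<in> S" "(False, w @ [True]) \<in> S"
  shows "\<not> S_visible (GT_V r) (GT_E r) S (False, w) (True, w)"
proof (rule not_S_visible_if_common_neighbours_in)
  show "is_walk (GT_V r) (GT_E r) [(False, w), (False, w @ [False]), (True, w)]
      (False, w) (True, w)"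
    using assms(1) by (auto simp: GT_walk_simps)
  fix z assume "GT_E r (False, w) z" "GT_E r z (True, w)"
  then have "z = (False, w @ [False]) \<or> z = (False, w @ [True])"
    using assms(1) by (cases z) (auto simp: GT_E_iff)
  then show "z \<in> S" using assms by blast
qed (auto simp: GT_E_iff)

lemma GT_not_visible_parent_twin:
  assumes "length v + 2 = r" "(c, v @ [y]) \<in> S"
  shows "\<not> S_visible (GT_V r) (GT_E r) S (c, v) (\<not> c, v @ [y])"
proof (rule not_S_visible_if_walks_of_length_3_blocked)
  show "is_walk (GT_V r) (GT_E r) [(c, v), (c, v @ [y]), (False, v @ [y, False]), (\<not> c, v @ [y])]
      (c, v) (\<not> c, v @ [y])"
    using assms(1) by (auto simp: GT_walk_simps)
  fix x z assume "GT_E r (c, v) x" "GT_E r x z" "GT_E r z (\<not> c, v @ [y])"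
  then show "x \<in> S \<or> z \<in> S" using assms by (cases x; cases z) (auto simp: GT_E_iff)
qed (use assms(1) in \<open>auto simp: GT_E_iff\<close>)

lemma GT_not_visible_leaf_uncle:
  assumes "length v + 2 = r" "(c, v @ [y]) \<in> S"
  shows "\<not> S_visible (GT_V r) (GT_E r) S (False, v @ [y, t]) (c, v @ [\<not> y])"
proof (rule not_S_visible_if_walks_of_length_3_blocked)
  show "is_walk (GT_V r) (GT_E r) [(False, v @ [y, t]), (c, v @ [y]), (c, v), (c, v @ [\<not> y])]
      (False, v @ [y, t]) (c, v @ [\<not> y])"
    using assms(1) by (auto simp: GT_walk_simps)
  fix x z assume "GT_E r (False, v @ [y, t]) x" "GT_E r x z" "GT_E r z (c, v @ [\<not> y])"
  then show "x \<in> S \<or> z \<in> S" using assms by (cases x; cases z) (auto simp: GT_E_iff)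
qed (use assms(1) in \<open>auto simp: GT_E_iff\<close>)

definition GT_leaves :: "nat \<Rightarrow> (bool \<times> bool list) set" where
  "GT_leaves r = {(False, w) | w. length w = r}"

lemma dual_GT_leaf_parent_notin:
  assumes dual: "dual_mutual_visibility_set (GT_V r) (GT_E r) S" and v: "length v + 2 = r"
  shows "(c, v @ [y]) \<notin> S"
proof
  assume p: "(c, v @ [y]) \<in> S"
  note split = dual_mutual_visibility_set_not_S_visible[OF dual]
  have in_V: "(c, v) \<in> GT_V r" "(c, v @ [y]) \<in> GT_V r" "(\<not> c, v @ [y]) \<in> GT_V r"
    "(c, v @ [\<not> y]) \<in> GT_V r" "(False, v @ [y, t]) \<in> GT_V r" for t
    using v by (auto simp: GT_V_iff)
  have parent_leaf: "(c, v) \<in> S \<longleftrightarrow> (False, v @ [y, t]) \<notin> S" for t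
    using split[OF in_V(1,5) GT_not_visible_parent_grandchild[OF v p]] .
  show False
  proof (cases "(c, v) \<in> S")
    case False
    then have leaves: "(False, v @ [y, t]) \<in> S" for t using parent_leaf by blast
    have "(\<not> c, v @ [y]) \<notin> S"
    proof
      assume "(\<not> c, v @ [y]) \<in> S"
      then have "(False, v @ [y]) \<in> S" "(True, v @ [y]) \<in> S" using p by (cases c; simp)+
      then have "\<not> S_visible (GT_V r) (GT_E r) S (False, v @ [y, False]) (False, v @ [y, True])"
        using GT_not_visible_sibling_leaves[of "v @ [y]" r S] v by simp
      then show False using split[OF in_V(5,5)] leaves by blast
    qed
    then show False using split[OF in_V(1,3) GT_not_visible_parent_twin[OF v p]] False by blast
  next
    case True
    then have "(False, v @ [y, False]) \<notin> S" using parent_leaf by blast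
    moreover have "\<not> S_visible (GT_V r) (GT_E r) S (c, v @ [y]) (c, v @ [\<not> y])"
      using GT_not_visible_siblings[of v r c S y] v True by simp
    with p have "(c, v @ [\<not> y]) \<notin> S" using split[OF in_V(2,4)] by blast
    ultimately show False using split[OF in_V(5,4) GT_not_visible_leaf_uncle[OF v p]] by blast
  qed
qed

lemma dual_GT_child_in:
  assumes dual: "dual_mutual_visibility_set (GT_V r) (GT_E r) S"
    and "length w + 1 < r" "(c, w) \<in> S"
  shows "(c, w @ [False]) \<in> S \<or> (c, w @ [True]) \<in> S"
proof -
  have "(c, w @ [y]) \<in> GT_V r" for y using assms(2) by (simp add: GT_V_iff)
  moreover have "\<not> S_visible (GT_V r) (GT_E r) S (c, w @ [False]) (c, w @ [True])"
    using GT_not_visible_siblings[OF assms(2,3), of False] by simp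
  ultimately show ?thesis using dual_mutual_visibility_set_not_S_visible[OF dual] by blast
qed

lemma dual_GT_subset_leaves:
  assumes dual: "dual_mutual_visibility_set (GT_V r) (GT_E r) S" and "r \<ge> 2"
  shows "S \<subseteq> GT_leaves r"
proof
  have notin: "(c, w) \<notin> S" if "length w + 1 + k = r" for c w k
    using that
  proof (induction k arbitrary: c w)
    case 0
    then have "w \<noteq> []" using \<open>r \<ge> 2\<close> by auto
    then obtain v y where "w = v @ [y]" by (metis append_butlast_last_id)
    with 0 show ?case using dual_GT_leaf_parent_notin[OF dual, of v] by simp
  next
    case (Suc k)
    then show ?case using dual_GT_child_in[OF dual, of w c] by fastforce
  qed
  fix x assume "x \<in> S"
  obtain c w where x: "x = (c, w)" by (cases x)
  have "x \<in> GT_V r"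
    using dual \<open>x \<in> S\<close> unfolding dual_mutual_visibility_set_def mutual_visibility_set_def by blast
  moreover have "\<not> length w < r" using notin[of w "r - Suc (length w)" c] x \<open>x \<in> S\<close> by auto
  ultimately show "x \<in> GT_leaves r" using x by (auto simp: GT_V_iff GT_leaves_def)
qed

lemma GT_leaves_eq:
  assumes "r \<ge> 1"
  shows "GT_leaves r = {(False, w @ [b]) | w b. length w = r - 1}"
proof -
  have "(\<exists>u. x = (False, u) \<and> length u = r) \<longleftrightarrow> (\<exists>w b. x = (False, w @ [b]) \<and> length w = r - 1)" for x
  proof
    assume "\<exists>u. x = (False, u) \<and> length u = r"
    then obtain u where "x = (False, u)" "length u = r" by blast
    with assms show "\<exists>w b. x = (False, w @ [b]) \<and> length w = r - 1"
      by (cases u rule: rev_cases) auto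
  qed (use assms in auto)
  then show ?thesis unfolding GT_leaves_def by blast
qed

definition sibling_free_leaf_set :: "nat \<Rightarrow> (bool \<times> bool list) set \<Rightarrow> bool" where
  "sibling_free_leaf_set r S \<longleftrightarrow>
     S \<subseteq> GT_leaves r \<and> (\<forall>w. (False, w @ [False]) \<notin> S \<or> (False, w @ [True]) \<notin> S)"

lemma dual_GT_sibling_free:
  assumes dual: "dual_mutual_visibility_set (GT_V r) (GT_E r) S" and "r \<ge> 2"
  shows "sibling_free_leaf_set r S"
proof -
  have leaves: "S \<subseteq> GT_leaves r" using dual_GT_subset_leaves[OF assms] .
  have "(False, w @ [False]) \<notin> S \<or> (False, w @ [True]) \<notin> S" for w
  proof (cases "length w + 1 = r")
    case True
    have "(c, w) \<in> GT_V r" "(c, w) \<notin> S" for c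
      using True leaves by (auto simp: GT_V_iff GT_leaves_def)
    then show ?thesis
      using dual_mutual_visibility_set_not_S_visible[OF dual] GT_not_visible_twins[OF True] by blast
  next
    case False
    then show ?thesis using leaves by (auto simp: GT_leaves_def)
  qed
  with leaves show ?thesis unfolding sibling_free_leaf_set_def by blast
qed

lemma sibling_free_total:
  assumes S: "sibling_free_leaf_set r S" and "r \<ge> 1"
  shows "total_mutual_visibility_set (GT_V r) (GT_E r) S"
  unfolding total_mutual_visibility_set_def
proof (intro conjI ballI)
  have leaves: "S \<subseteq> GT_leaves r" using S unfolding sibling_free_leaf_set_def by blast
  then show "S \<subseteq> GT_V r" by (auto simp: GT_leaves_def GT_V_iff)
  define sibling :: "bool \<times> bool list \<Rightarrow> bool \<times> bool list"
    where "sibling x = (False, butlast (snd x) @ [\<not> last (snd x)])" for x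
  fix u v assume "u \<in> GT_V r" "v \<in> GT_V r"
  then obtain p where "is_shortest_path (GT_V r) (GT_E r) p u v"
    using GT_connected[OF \<open>r \<ge> 1\<close>] shortest_path_exists by metis
  then show "S_visible (GT_V r) (GT_E r) S u v"
  proof (rule S_visible_if_twins[OF symp_GT_E, where twin = sibling, rotated -1])
    fix x y assume xS: "x \<in> S"
    with leaves GT_leaves_eq[OF \<open>r \<ge> 1\<close>] have "\<exists>w b. x = (False, w @ [b]) \<and> length w = r - 1"
      by blast
    then obtain w b where x: "x = (False, w @ [b])" "length w = r - 1" by blast
    show "sibling x \<in> GT_V r - S"
      using x xS S \<open>r \<ge> 1\<close> by (cases b) (auto simp: sibling_def GT_V_iff sibling_free_leaf_set_def)
    show "GT_E r x y \<Longrightarrow> GT_E r (sibling x) y"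
      using x by (cases y) (auto simp: sibling_def GT_E_iff)
    show "GT_E r x y \<Longrightarrow> y \<notin> S"
      using x leaves by (cases y) (auto simp: GT_E_iff GT_leaves_def)
  qed
qed

definition leaf_choice :: "nat \<Rightarrow> (bool list \<Rightarrow> bool) \<Rightarrow> (bool \<times> bool list) set" where
  "leaf_choice r f = (\<lambda>w. (False, w @ [f w])) ` {w. length w = r - 1}"

lemma finite_bool_lists_length: "finite {w :: bool list. length w = n}"
  using finite_lists_length_eq[of "UNIV :: bool set" n] by simp

lemma card_bool_lists_length: "card {w :: bool list. length w = n} = 2 ^ n"
  using card_lists_length_eq[of "UNIV :: bool set" n] by simp

lemma sibling_free_leaf_choice: "r \<ge> 1 \<Longrightarrow> sibling_free_leaf_set r (leaf_choice r f)"
  unfolding sibling_free_leaf_set_def leaf_choice_def GT_leaves_def by auto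

lemma card_leaf_choice: "card (leaf_choice r f) = 2 ^ (r - 1)"
  unfolding leaf_choice_def by (subst card_image) (auto intro: inj_onI simp: card_bool_lists_length)

lemma sibling_free_parent_inj:
  assumes S: "sibling_free_leaf_set r S" and "r \<ge> 1"
  shows "inj_on (\<lambda>x. butlast (snd x)) S" "(\<lambda>x. butlast (snd x)) ` S \<subseteq> {w. length w = r - 1}"
proof -
  have leaves: "S \<subseteq> {(False, w @ [b]) | w b. length w = r - 1}"
    using S GT_leaves_eq[OF \<open>r \<ge> 1\<close>] unfolding sibling_free_leaf_set_def by blast
  then show "(\<lambda>x. butlast (snd x)) ` S \<subseteq> {w. length w = r - 1}" by auto
  show "inj_on (\<lambda>x. butlast (snd x)) S"
  proof (rule inj_onI)
    fix x y assume "x \<in> S" "y \<in> S" and parent: "butlast (snd x) = butlast (snd y)"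
    moreover obtain w b where "x = (False, w @ [b])" using \<open>x \<in> S\<close> leaves by auto
    moreover obtain w' b' where "y = (False, w' @ [b'])" using \<open>y \<in> S\<close> leaves by auto
    moreover have "w' = w" using parent calculation by simp
    ultimately show "x = y" using S unfolding sibling_free_leaf_set_def by (cases b; cases b') auto
  qed
qed

lemma sibling_free_card_le:
  assumes "sibling_free_leaf_set r S" "r \<ge> 1"
  shows "card S \<le> 2 ^ (r - 1)"
  using card_inj_on_le[OF sibling_free_parent_inj[OF assms] finite_bool_lists_length]
  by (simp add: card_bool_lists_length)

lemma sibling_free_max_eq_leaf_choice:
  assumes S: "sibling_free_leaf_set r S" and "r \<ge> 1" and card: "card S = 2 ^ (r - 1)"
  shows "S = leaf_choice r (\<lambda>w. (False, w @ [True]) \<in> S)"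
proof -
  note inj = sibling_free_parent_inj[OF S \<open>r \<ge> 1\<close>]
  have "card ((\<lambda>x. butlast (snd x)) ` S) = card S" by (rule card_image[OF inj(1)])
  also have "\<dots> = card {w :: bool list. length w = r - 1}"
    unfolding card card_bool_lists_length ..
  finally have parents: "(\<lambda>x. butlast (snd x)) ` S = {w. length w = r - 1}"
    by (rule card_subset_eq[OF finite_bool_lists_length inj(2)])
  have leaves: "S \<subseteq> {(False, w @ [b]) | w b. length w = r - 1}"
    using S GT_leaves_eq[OF \<open>r \<ge> 1\<close>] unfolding sibling_free_leaf_set_def by blast
  have no_siblings: "(False, w @ [False]) \<in> S \<Longrightarrow> (False, w @ [True]) \<notin> S" for w
    using S unfolding sibling_free_leaf_set_def by blast
  show ?thesis
  proof (intro equalityI subsetI)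
    fix x assume "x \<in> S"
    with leaves have "\<exists>w b. x = (False, w @ [b]) \<and> length w = r - 1" by blast
    then obtain w b where "x = (False, w @ [b])" "length w = r - 1" by blast
    with \<open>x \<in> S\<close> show "x \<in> leaf_choice r (\<lambda>w. (False, w @ [True]) \<in> S)"
      using no_siblings unfolding leaf_choice_def by (cases b) auto
  next
    fix x assume "x \<in> leaf_choice r (\<lambda>w. (False, w @ [True]) \<in> S)"
    then obtain w where x: "x = (False, w @ [(False, w @ [True]) \<in> S])"
      and "w \<in> {w. length w = r - 1}"
      unfolding leaf_choice_def by auto
    then have "w \<in> (\<lambda>x. butlast (snd x)) ` S" using parents by simp
    then obtain y where parent: "w = butlast (snd y)" and "y \<in> S" by (rule imageE)
    moreover obtain w' b where "y = (False, w' @ [b])" using \<open>y \<in> S\<close> leaves by auto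
    moreover have "w' = w" using parent calculation by simp
    ultimately have "(False, w @ [b]) \<in> S" by simp
    then show "x \<in> S"
      using x no_siblings by (cases b; cases "(False, w @ [True]) \<in> S") simp_all
  qed
qed

lemma card_max_sibling_free_leaf_sets:
  assumes "r \<ge> 1"
  shows "card {S. sibling_free_leaf_set r S \<and> card S = 2 ^ (r - 1)} = 2 ^ 2 ^ (r - 1)"
proof -
  let ?W = "{w :: bool list. length w = r - 1}"
  have inj: "inj_on (leaf_choice r) (?W \<rightarrow>\<^sub>E UNIV)"
  proof (rule inj_onI)
    fix f g assume f: "f \<in> ?W \<rightarrow>\<^sub>E UNIV" and g: "g \<in> ?W \<rightarrow>\<^sub>E UNIV"
      and eq: "leaf_choice r f = leaf_choice r g"
    show "f = g"
    proof
      fix w show "f w = g w"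
      proof (cases "w \<in> ?W")
        case True
        then have "(False, w @ [f w]) \<in> leaf_choice r f"
          unfolding leaf_choice_def by (rule rev_image_eqI) simp_all
        then have "(False, w @ [f w]) \<in> leaf_choice r g" using eq by simp
        then show ?thesis unfolding leaf_choice_def by auto
      next
        case False
        show ?thesis using PiE_arb[OF f False] PiE_arb[OF g False] by (simp only:)
      qed
    qed
  qed
  have "{S. sibling_free_leaf_set r S \<and> card S = 2 ^ (r - 1)} = leaf_choice r ` (?W \<rightarrow>\<^sub>E UNIV)"
  proof (intro equalityI subsetI)
    fix S assume "S \<in> {S. sibling_free_leaf_set r S \<and> card S = 2 ^ (r - 1)}"
    then have "S = leaf_choice r (\<lambda>w. (False, w @ [True]) \<in> S)"
      using sibling_free_max_eq_leaf_choice[OF _ assms] by blast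
    also have "\<dots> = leaf_choice r (restrict (\<lambda>w. (False, w @ [True]) \<in> S) ?W)"
      unfolding leaf_choice_def by (rule image_cong) simp_all
    finally show "S \<in> leaf_choice r ` (?W \<rightarrow>\<^sub>E UNIV)"
      by (rule image_eqI[where f = "leaf_choice r"]) simp
  qed (use assms sibling_free_leaf_choice card_leaf_choice in auto)
  then have "card {S. sibling_free_leaf_set r S \<and> card S = 2 ^ (r - 1)}
      = card (?W \<rightarrow>\<^sub>E (UNIV :: bool set))"
    using card_image[OF inj] by (simp only:)
  also have "\<dots> = 2 ^ 2 ^ (r - 1)"
    by (simp add: card_PiE finite_bool_lists_length card_bool_lists_length)
  finally show ?thesis .
qed

lemma Max_card_sibling_free_leaf_sets:
  assumes "r \<ge> 1"
  shows "Max {card S | S. sibling_free_leaf_set r S} = 2 ^ (r - 1)"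
proof (rule Max_eqI)
  show "finite {card S | S. sibling_free_leaf_set r S}"
    using sibling_free_card_le[OF _ assms] by (auto intro: finite_subset[of _ "{..2 ^ (r - 1)}"])
  show "2 ^ (r - 1) \<in> {card S | S. sibling_free_leaf_set r S}"
    unfolding mem_Collect_eq using sibling_free_leaf_choice[OF assms] card_leaf_choice
    by (intro exI[of _ "leaf_choice r (\<lambda>_. False)"]) simp
qed (use sibling_free_card_le[OF _ assms] in blast)

theorem mainTheorem5:
  fixes r :: nat
  assumes "r \<ge> 2"
  shows "mu_t (GT_V r) (GT_E r) = 2 ^ (r - 1)
       \<and> mu_d (GT_V r) (GT_E r) = 2 ^ (r - 1)
       \<and> card (mu_t_sets (GT_V r) (GT_E r)) = 2 ^ (2 ^ (r - 1))
       \<and> card (mu_d_sets (GT_V r) (GT_E r)) = 2 ^ (2 ^ (r - 1))"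
proof -
  have "r \<ge> 1" using assms by simp
  have total_iff: "total_mutual_visibility_set (GT_V r) (GT_E r) S \<longleftrightarrow> sibling_free_leaf_set r S"
    and dual_iff: "dual_mutual_visibility_set (GT_V r) (GT_E r) S \<longleftrightarrow> sibling_free_leaf_set r S" for S
    using sibling_free_total[OF _ \<open>r \<ge> 1\<close>] total_imp_dual_mutual_visibility_set
      dual_GT_sibling_free[OF _ assms] by blast+
  have "mu_t (GT_V r) (GT_E r) = 2 ^ (r - 1)" "mu_d (GT_V r) (GT_E r) = 2 ^ (r - 1)"
    unfolding mu_t_def mu_d_def total_iff dual_iff
    using Max_card_sibling_free_leaf_sets[OF \<open>r \<ge> 1\<close>] by simp_all
  then show ?thesis
    unfolding mu_t_sets_def mu_d_sets_def total_iff dual_iff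
    using card_max_sibling_free_leaf_sets[OF \<open>r \<ge> 1\<close>] by simp
qed

end
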